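(* $\mathrm{PoTF}_{\textsc{Min-Sum}}=\Theta(n)$, i.e., the price of temporal fairness with respect to the \textsc{Min-Sum} objective is both $O(n)$ and $\Omega(n)$ as a function of the number of agents $n$.
   Context: An instance $\mathcal{I}=(N,P,T,(\mathbf{D}_i)_{i\in N})$ has agents $N=[n]$, projects $P$, timesteps $T=[\ell]$, and disapproval sets $D_{ik}\subseteq P$ for $i\in N,k\in T$. An outcome is $\mathbf{o}=(o_1,\dots,o_\ell)\in P^\ell$; $\Pi(\mathcal{I})$ is the set of all outcomes. $d_i(\mathbf{o}^{(k)})=|\{t\in[k]:o_t\in D_{it}\}|$ and $d_i(\mathbf{o})=d_i(\mathbf{o}^{(\ell)})$. A set of constraints is $\mathbf{A}=\{(t_1,\lambda_1),\dots,(t_\tau,\lambda_\tau)\}$ with $t_j\in T$, $\lambda_j\in\{0,\dots,\ell\}$, $t_1\le\dots\le t_\tau$, $\lambda_1\le\dots\le\lambda_\tau$; $\Pi_{\mathbf{A}}(\mathcal{I})$ is the set of outcomes with $\max_{i\in N}d_i(\mathbf{o}^{(t)})\le\lambda$ for all $(t,\lambda)\in\mathbf{A}$, and $\mathbf{A}$ is feasible if $\Pi_{\mathbf{A}}(\mathcal{I})\neq\emptyset$. The \textsc{Min-Sum}-value of $\mathbf{o}$ is $\sum_{i\in N}d_i(\mathbf{o})$. The price of temporal fairness is $\mathrm{PoTF}_{\textsc{Min-Sum}}=\sup_{\mathcal{I},\mathbf{A}\text{ feasible}}\frac{\min_{\mathbf{o}\in\Pi_{\mathbf{A}}(\mathcal{I})}\sum_i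 d_i(\mathbf{o})}{\min_{\mathbf{o}\in\Pi(\mathcal{I})}\sum_i d_i(\mathbf{o})}$, considered as a function of $n$ (supremum over instances with $n$ agents). *)

theory Defs
  imports Complex_Main "HOL-Library.FuncSet" "HOL-Library.Extended_Real"
begin

text \<open>Agents are N = {1..n}, projects are a finite nonempty set P of naturals,
  timesteps are T = {1..l}; D i t is the disapproval set of agent i at timestep t.\<close>

definition agents :: "nat \<Rightarrow> nat set" where
  "agents n = {1..n}"

definition timesteps :: "nat \<Rightarrow> nat set" where
  "timesteps l = {1..l}"

definition valid_instance :: "nat \<Rightarrow> nat set \<Rightarrow> nat \<Rightarrow> (nat \<Rightarrow> nat \<Rightarrow> nat set) \<Rightarrow> bool" where
  "valid_instance n P l D \<longleftrightarrow> 1 \<le> n \<and> finite P \<and> P \<noteq> {} \<and>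
     (\<forall>i\<in>agents n. \<forall>t\<in>timesteps l. D i t \<subseteq> P)"

definition outcomes :: "nat set \<Rightarrow> nat \<Rightarrow> (nat \<Rightarrow> nat) set" where
  "outcomes P l = timesteps l \<rightarrow>\<^sub>E P"

definition disapp :: "(nat \<Rightarrow> nat \<Rightarrow> nat set) \<Rightarrow> nat \<Rightarrow> (nat \<Rightarrow> nat) \<Rightarrow> nat \<Rightarrow> nat" where
  "disapp D i out k = card {t \<in> {1..k}. out t \<in> D i t}"

definition valid_constraints :: "nat \<Rightarrow> (nat \<times> nat) list \<Rightarrow> bool" where
  "valid_constraints l A \<longleftrightarrow> (\<forall>(t,lam)\<in>set A. t \<in> timesteps l \<and> lam \<le> l) \<and>
     sorted (map fst A) \<and> sorted (map snd A)"

definition constrained_outcomes ::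
  "nat \<Rightarrow> nat set \<Rightarrow> nat \<Rightarrow> (nat \<Rightarrow> nat \<Rightarrow> nat set) \<Rightarrow> (nat \<times> nat) list \<Rightarrow> (nat \<Rightarrow> nat) set" where
  "constrained_outcomes n P l D A =
     {out \<in> outcomes P l. \<forall>(t,lam)\<in>set A. Max ((\<lambda>i. disapp D i out t) ` agents n) \<le> lam}"

definition feasible :: "nat \<Rightarrow> nat set \<Rightarrow> nat \<Rightarrow> (nat \<Rightarrow> nat \<Rightarrow> nat set) \<Rightarrow> (nat \<times> nat) list \<Rightarrow> bool" where
  "feasible n P l D A \<longleftrightarrow> constrained_outcomes n P l D A \<noteq> {}"

definition minsum_value :: "nat \<Rightarrow> nat \<Rightarrow> (nat \<Rightarrow> nat \<Rightarrow> nat set) \<Rightarrow> (nat \<Rightarrow> nat) \<Rightarrow> nat" where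
  "minsum_value n l D out = (\<Sum>i\<in>agents n. disapp D i out l)"

text \<open>Ratio of the constrained optimum to the unconstrained optimum (real division;
  if the unconstrained optimum is 0, the constrained one is 0 too, and the ratio is 0 by
  Isabelle's convention x/0 = 0, which does not affect the supremum).\<close>
definition potf_ratio ::
  "nat \<Rightarrow> nat set \<Rightarrow> nat \<Rightarrow> (nat \<Rightarrow> nat \<Rightarrow> nat set) \<Rightarrow> (nat \<times> nat) list \<Rightarrow> real" where
  "potf_ratio n P l D A =
     real (Min (minsum_value n l D ` constrained_outcomes n P l D A)) /
     real (Min (minsum_value n l D ` outcomes P l))"

definition PoTF_MinSum :: "nat \<Rightarrow> ereal" where
  "PoTF_MinSum n = (SUP x \<in> {(P, l, D, A). valid_instance n P l D \<and> valid_constraints l A \<and>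
                                   feasible n P l D A}.
                       ereal (case x of (P, l, D, A) \<Rightarrow> potf_ratio n P l D A))"

end

theory Submission
  imports Defs
begin

text \<open>Upper bound: take an optimal unconstrained outcome and, at every timestep where some agent
  disapproves of its choice, substitute the choice of a feasible constrained outcome. No agent is
  worse off than under the constrained outcome, so all constraints still hold, and each agent
  disapproves only at substituted timesteps; there are at most as many of those as the optimal
  Min-Sum value, giving a factor of at most n.

  Lower bound: with two timesteps, agent 1 disapproves of project 0 at the first step and of
  everything at the second, while every other agent disapproves of project 1 at the first step.
  Choosing 0 first costs 2 in total, but the constraint (2, 1) forces choosing 1, which costs n.\<close>

lemma finite_outcomes: "finite P \<Longrightarrow> finite (outcomes P l)"
  unfolding outcomes_def timesteps_def by (intro finite_PiE) auto

lemma constant_outcome_in_outcomes: "p \<in> P \<Longrightarrow> (\<lambda>t\<in>timesteps l. p) \<in> outcomes P l"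
  by (simp add: outcomes_def)

lemma disapp_0 [simp]: "disapp D i out 0 = 0"
  by (simp add: disapp_def)

lemma disapp_Suc [simp]:
  "disapp D i out (Suc k) = disapp D i out k + of_bool (out (Suc k) \<in> D i (Suc k))"
proof (cases "out (Suc k) \<in> D i (Suc k)")
  case True
  then have "{t \<in> {1..Suc k}. out t \<in> D i t} = insert (Suc k) {t \<in> {1..k}. out t \<in> D i t}"
    by (auto simp: le_Suc_eq)
  with True show ?thesis
    by (simp add: disapp_def)
next
  case False
  then have "{t \<in> {1..Suc k}. out t \<in> D i t} = {t \<in> {1..k}. out t \<in> D i t}"
    by (auto simp: le_Suc_eq)
  with False show ?thesis
    by (simp add: disapp_def)
qed

lemma disapp_mono:
  assumes "\<And>t. t \<in> {1..k} \<Longrightarrow> out t \<in> D i t \<Longrightarrow> out' t \<in> D i t"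
  shows "disapp D i out k \<le> disapp D i out' k"
  unfolding disapp_def using assms by (intro card_mono) auto

lemma Max_image_mono:
  fixes f g :: "'a \<Rightarrow> 'b :: linorder"
  assumes "finite A" and "\<And>x. x \<in> A \<Longrightarrow> f x \<le> g x"
  shows "Max (f ` A) \<le> Max (g ` A)"
proof (cases "A = {}")
  case False
  show ?thesis
  proof (rule Max.boundedI)
    fix y
    assume "y \<in> f ` A"
    then obtain x where "x \<in> A" and "y = f x"
      by blast
    then have "y \<le> g x"
      using assms(2) by simp
    also have "g x \<le> Max (g ` A)"
      using assms(1) \<open>x \<in> A\<close> by simp
    finally show "y \<le> Max (g ` A)" .
  qed (use assms(1) False in simp_all)
qed simp

lemma constrained_outcomes_if_fewer_disapprovals:
  assumes "out \<in> outcomes P l" and "out' \<in> constrained_outcomes n P l D A"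
    and "\<And>i k. i \<in> agents n \<Longrightarrow> disapp D i out k \<le> disapp D i out' k"
  shows "out \<in> constrained_outcomes n P l D A"
proof -
  have "Max ((\<lambda>i. disapp D i out k) ` agents n) \<le> Max ((\<lambda>i. disapp D i out' k) ` agents n)"
    for k
    using assms(3) by (intro Max_image_mono) (simp_all add: agents_def)
  then show ?thesis
    using assms(1,2) unfolding constrained_outcomes_def by (fastforce intro: order_trans)
qed

definition splice_outcome ::
  "nat \<Rightarrow> (nat \<Rightarrow> nat \<Rightarrow> nat set) \<Rightarrow> (nat \<Rightarrow> nat) \<Rightarrow> (nat \<Rightarrow> nat) \<Rightarrow> nat \<Rightarrow> nat" where
  "splice_outcome n D base fallback t =
     (if \<forall>i\<in>agents n. base t \<notin> D i t then base t else fallback t)"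

lemma splice_outcome_in_outcomes:
  "base \<in> outcomes P l \<Longrightarrow> fallback \<in> outcomes P l \<Longrightarrow>
    splice_outcome n D base fallback \<in> outcomes P l"
  by (auto simp: outcomes_def splice_outcome_def PiE_def extensional_def)

lemma disapp_splice_outcome_le:
  "i \<in> agents n \<Longrightarrow> disapp D i (splice_outcome n D base fallback) k \<le> disapp D i fallback k"
  by (rule disapp_mono) (auto simp: splice_outcome_def split: if_splits)

lemma card_contested_le_minsum_value:
  "card {t \<in> {1..l}. \<exists>i\<in>agents n. out t \<in> D i t} \<le> minsum_value n l D out"
proof -
  have "{t \<in> {1..l}. \<exists>i\<in>agents n. out t \<in> D i t} = (\<Union>i\<in>agents n. {t \<in> {1..l}. out t \<in> D i t})"
    by auto
  also have "card \<dots> \<le> (\<Sum>i\<in>agents n. card {t \<in> {1..l}. out t \<in> D i t})"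
    by (rule card_UN_le) (simp add: agents_def)
  finally show ?thesis
    by (simp add: minsum_value_def disapp_def)
qed

lemma minsum_value_splice_outcome_le:
  "minsum_value n l D (splice_outcome n D base fallback) \<le> n * minsum_value n l D base"
proof -
  let ?contested = "{t \<in> {1..l}. \<exists>i\<in>agents n. base t \<in> D i t}"
  have "minsum_value n l D (splice_outcome n D base fallback) \<le> (\<Sum>i\<in>agents n. card ?contested)"
    unfolding minsum_value_def disapp_def
    by (intro sum_mono card_mono) (auto simp: splice_outcome_def)
  also have "\<dots> = n * card ?contested"
    by (simp add: agents_def)
  also have "\<dots> \<le> n * minsum_value n l D base"
    using card_contested_le_minsum_value by simp
  finally show ?thesis .
qed

lemma Min_constrained_le_n_times_Min:
  assumes "finite P" and "feasible n P l D A"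
  shows "Min (minsum_value n l D ` constrained_outcomes n P l D A)
           \<le> n * Min (minsum_value n l D ` outcomes P l)"
proof -
  obtain fallback where fallback: "fallback \<in> constrained_outcomes n P l D A"
    using assms(2) unfolding feasible_def by blast
  then have "fallback \<in> outcomes P l"
    by (simp add: constrained_outcomes_def)
  then have "Min (minsum_value n l D ` outcomes P l) \<in> minsum_value n l D ` outcomes P l"
    using finite_outcomes[OF assms(1)] by (intro Min_in) auto
  then obtain base where base: "base \<in> outcomes P l"
    and base_opt: "minsum_value n l D base = Min (minsum_value n l D ` outcomes P l)"
    by auto
  let ?spliced = "splice_outcome n D base fallback"
  have "?spliced \<in> constrained_outcomes n P l D A"
    using base fallback \<open>fallback \<in> outcomes P l\<close>
    by (auto intro: constrained_outcomes_if_fewer_disapprovals splice_outcome_in_outcomes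
        disapp_splice_outcome_le)
  then have "Min (minsum_value n l D ` constrained_outcomes n P l D A)
      \<le> minsum_value n l D ?spliced"
    using finite_outcomes[OF assms(1)]
    by (intro Min_le) (auto simp: constrained_outcomes_def)
  also have "\<dots> \<le> n * minsum_value n l D base"
    by (rule minsum_value_splice_outcome_le)
  finally show ?thesis
    by (simp add: base_opt)
qed

lemma potf_ratio_le:
  assumes "finite P" and "feasible n P l D A"
  shows "potf_ratio n P l D A \<le> real n"
proof (cases "Min (minsum_value n l D ` outcomes P l) = 0")
  case False
  have "real (Min (minsum_value n l D ` constrained_outcomes n P l D A))
      \<le> real n * real (Min (minsum_value n l D ` outcomes P l))"
    using Min_constrained_le_n_times_Min[OF assms] by (metis of_nat_le_iff of_nat_mult)
  with False show ?thesis
    by (simp add: potf_ratio_def divide_le_eq)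
qed (simp add: potf_ratio_def)

lemma PoTF_MinSum_le: "PoTF_MinSum n \<le> ereal (real n)"
  unfolding PoTF_MinSum_def
proof (rule SUP_least, clarify)
  fix P l D A
  assume "valid_instance n P l D" "valid_constraints l A" "feasible n P l D A"
  then show "ereal (potf_ratio n P l D A) \<le> ereal (real n)"
    by (simp add: valid_instance_def potf_ratio_le)
qed

definition two_step_disapprovals :: "nat \<Rightarrow> nat \<Rightarrow> nat set" where
  "two_step_disapprovals i t =
     (if t = 1 then (if i = 1 then {0} else {1}) else if i = 1 then {0, 1} else {})"

lemma two_step_outcome_values:
  "out \<in> outcomes {0, 1} 2 \<Longrightarrow> out 1 \<in> {0, 1} \<and> out 2 \<in> {0, 1}"
  by (auto simp: outcomes_def timesteps_def)

lemma disapp_two_step: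
  assumes "out \<in> outcomes {0, 1} 2"
  shows "disapp two_step_disapprovals i out 2 =
    (if i = 1 then (if out 1 = 0 then 2 else 1) else (if out 1 = 0 then 0 else 1))"
  using two_step_outcome_values[OF assms]
  by (auto simp: numeral_2_eq_2 two_step_disapprovals_def)

lemma minsum_value_two_step:
  assumes "1 \<le> n" and "out \<in> outcomes {0, 1} 2"
  shows "minsum_value n 2 two_step_disapprovals out = (if out 1 = 0 then 2 else n)"
proof -
  have "agents n = insert 1 {2..n}"
    using assms(1) by (auto simp: agents_def)
  then show ?thesis
    using assms by (simp add: minsum_value_def disapp_two_step)
qed

lemma constrained_outcomes_two_step:
  assumes "1 \<le> n"
  shows "constrained_outcomes n {0, 1} 2 two_step_disapprovals [(2, 1)] =
    {out \<in> outcomes {0, 1} 2. out 1 = 1}"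
proof -
  have "Max ((\<lambda>i. disapp two_step_disapprovals i out 2) ` agents n) \<le> 1 \<longleftrightarrow> out 1 = 1"
    if "out \<in> outcomes {0, 1} 2" for out
    using assms two_step_outcome_values[OF that]
    by (subst Max_le_iff) (auto simp: agents_def disapp_two_step[OF that])
  then show ?thesis
    by (auto simp: constrained_outcomes_def)
qed

lemma potf_ratio_two_step:
  assumes "2 \<le> n"
  shows "potf_ratio n {0, 1} 2 two_step_disapprovals [(2, 1)] = real n / 2"
proof -
  let ?const = "\<lambda>p. \<lambda>t\<in>timesteps 2. p"
  have n1: "1 \<le> n"
    using assms by simp
  have const_in: "?const 0 \<in> outcomes {0, 1} 2" "?const 1 \<in> outcomes {0, 1} 2"
    by (auto intro: constant_outcome_in_outcomes)
  have "minsum_value n 2 two_step_disapprovals ` outcomes {0, 1} 2 = {2, n}"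
  proof (intro equalityI subsetI)
    show "v \<in> {2, n}" if "v \<in> minsum_value n 2 two_step_disapprovals ` outcomes {0, 1} 2" for v
      using that n1 by (auto simp: minsum_value_two_step)
    have "minsum_value n 2 two_step_disapprovals (?const p) = (if p = 0 then 2 else n)"
      if "p \<in> {0, 1}" for p
      using minsum_value_two_step[OF n1] const_in that by (auto simp: timesteps_def)
    then have "{2, n} = minsum_value n 2 two_step_disapprovals ` {?const 0, ?const 1}"
      by simp
    also have "\<dots> \<subseteq> minsum_value n 2 two_step_disapprovals ` outcomes {0, 1} 2"
      using const_in by blast
    finally show "v \<in> minsum_value n 2 two_step_disapprovals ` outcomes {0, 1} 2"
      if "v \<in> {2, n}" for v
      using that by blast
  qed
  moreover have "minsum_value n 2 two_step_disapprovals `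
      constrained_outcomes n {0, 1} 2 two_step_disapprovals [(2, 1)] = {n}"
  proof -
    have "?const 1 \<in> {out \<in> outcomes {0, 1} 2. out 1 = 1}"
      using const_in(2) by (simp add: timesteps_def)
    moreover have "minsum_value n 2 two_step_disapprovals out = n"
      if "out \<in> {out \<in> outcomes {0, 1} 2. out 1 = 1}" for out
      using that minsum_value_two_step[OF n1] by simp
    ultimately show ?thesis
      unfolding constrained_outcomes_two_step[OF n1] by (auto intro: rev_image_eqI)
  qed
  ultimately show ?thesis
    using assms by (simp add: potf_ratio_def)
qed

lemma PoTF_MinSum_ge:
  assumes "2 \<le> n"
  shows "ereal (real n / 2) \<le> PoTF_MinSum n"
proof -
  have "valid_instance n {0, 1} 2 two_step_disapprovals"
    using assms by (auto simp: valid_instance_def two_step_disapprovals_def)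
  moreover have "valid_constraints 2 [(2, 1)]"
    by (simp add: valid_constraints_def timesteps_def)
  moreover have "(\<lambda>t\<in>timesteps 2. 1) \<in> constrained_outcomes n {0, 1} 2 two_step_disapprovals [(2, 1)]"
    using assms constant_outcome_in_outcomes[of 1 "{0, 1}" 2]
    by (subst constrained_outcomes_two_step) (simp_all add: timesteps_def)
  then have "feasible n {0, 1} 2 two_step_disapprovals [(2, 1)]"
    by (auto simp: feasible_def)
  ultimately show ?thesis
    unfolding PoTF_MinSum_def using potf_ratio_two_step[OF assms]
    by (intro SUP_upper2[where i = "({0, 1}, 2, two_step_disapprovals, [(2, 1)])"]) auto
qed

theorem theorem7:
  shows "\<exists>c C. c > 0 \<and> C > 0 \<and>
    (\<forall>\<^sub>F n in sequentially.
        ereal (c * real n) \<le> PoTF_MinSum n \<and> PoTF_MinSum n \<le> ereal (C * real n))"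
proof (intro exI conjI)
  show "\<forall>\<^sub>F n in sequentially.
      ereal (1 / 2 * real n) \<le> PoTF_MinSum n \<and> PoTF_MinSum n \<le> ereal (1 * real n)"
    using eventually_ge_at_top[of "2 :: nat"]
    by eventually_elim (use PoTF_MinSum_ge PoTF_MinSum_le in simp)
qed simp_all

end
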